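(* Let $\epsilon\in(0,1/2]$, $d\ge1$, and let $f$ be the binary-tree function of depth $d$ on $n=2^{d+1}-2$ variables, with unit costs and $p_i=\frac{1+\epsilon}{2}$ for all $i$. Let $q=\left(\frac{1+\epsilon}{2}\right)^d$ and suppose $q\le\epsilon$. Then $$\mathsf{OPT}_{\mathcal N}(f,c,p)\ge \frac{\epsilon^2}{8q}.$$
   Context: Stochastic Boolean Function Evaluation setup: the input $x\in\{0,1\}^n$ has independent coordinates with $\Pr(x_i=1)=p_i$; testing $x_i$ costs $c_i$ (here $c_i=1$). A non-adaptive strategy is a fixed permutation of $[n]$; variables are tested in that order until $f(x)$ is determined (i.e. $f(x')=f(x)$ for all $x'$ agreeing with $x$ on tested coordinates). $\mathsf{OPT}_{\mathcal N}(f,c,p)$ is the minimum expected total test cost over non-adaptive strategies. Binary-tree function of depth $d$: in the complete binary tree of depth $d$ (root at depth $0$, $2^d$ leaves), the $n=2^{d+1}-2$ edges are numbered $1,\dots,n$ and variable $x_i$ is associated with edge $i$; a leaf is alive if $x_i=1$ for every edge on its root-to-leaf path, and $f(x)=1$ iff some leaf is alive. *)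

theory Defs
  imports Complex_Main
begin

text \<open>Variables are indexed by 1..n. An input is a Boolean assignment to these
  variables (set to False outside 1..n so that the input space is finite).\<close>

definition inputs :: "nat \<Rightarrow> (nat \<Rightarrow> bool) set" where
  "inputs n = {x. \<forall>i. i \<notin> {1..n} \<longrightarrow> \<not> x i}"

definition prob_input :: "nat \<Rightarrow> (nat \<Rightarrow> real) \<Rightarrow> (nat \<Rightarrow> bool) \<Rightarrow> real" where
  "prob_input n p x = (\<Prod>i\<in>{1..n}. if x i then p i else 1 - p i)"

definition strategies :: "nat \<Rightarrow> nat list set" where
  "strategies n = {\<sigma>. distinct \<sigma> \<and> set \<sigma> = {1..n}}"

definition determined :: "((nat \<Rightarrow> bool) \<Rightarrow> bool) \<Rightarrow> nat \<Rightarrow> nat set \<Rightarrow> (nat \<Rightarrow> bool) \<Rightarrow> bool" where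
  "determined f n S x = (\<forall>y\<in>inputs n. (\<forall>i\<in>S. y i = x i) \<longrightarrow> f y = f x)"

definition num_tests :: "((nat \<Rightarrow> bool) \<Rightarrow> bool) \<Rightarrow> nat \<Rightarrow> nat list \<Rightarrow> (nat \<Rightarrow> bool) \<Rightarrow> nat" where
  "num_tests f n \<sigma> x = (LEAST k. determined f n (set (take k \<sigma>)) x)"

definition strat_cost :: "((nat \<Rightarrow> bool) \<Rightarrow> bool) \<Rightarrow> nat \<Rightarrow> (nat \<Rightarrow> real) \<Rightarrow> nat list \<Rightarrow> (nat \<Rightarrow> bool) \<Rightarrow> real" where
  "strat_cost f n c \<sigma> x = (\<Sum>i\<leftarrow>take (num_tests f n \<sigma> x) \<sigma>. c i)"

definition expected_cost :: "((nat \<Rightarrow> bool) \<Rightarrow> bool) \<Rightarrow> nat \<Rightarrow> (nat \<Rightarrow> real) \<Rightarrow> (nat \<Rightarrow> real) \<Rightarrow> nat list \<Rightarrow> real" where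
  "expected_cost f n c p \<sigma> = (\<Sum>x\<in>inputs n. prob_input n p x * strat_cost f n c \<sigma> x)"

definition OPT_N :: "((nat \<Rightarrow> bool) \<Rightarrow> bool) \<Rightarrow> nat \<Rightarrow> (nat \<Rightarrow> real) \<Rightarrow> (nat \<Rightarrow> real) \<Rightarrow> real" where
  "OPT_N f n c p = Min (expected_cost f n c p ` strategies n)"

text \<open>Nodes of the complete binary tree are heap
  indices 1..2^(d+1)-1 (root 1, children of v are 2v and 2v+1); the edge into node
  v (v >= 2) is variable v - 1, so edges are numbered 1..2^(d+1)-2. Leaves are nodes
  2^d..2^(d+1)-1, and the edges on the root-to-leaf path of leaf l are those into the
  nodes l div 2^k for k < d.\<close>
definition bintree_fun :: "nat \<Rightarrow> (nat \<Rightarrow> bool) \<Rightarrow> bool" where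
  "bintree_fun d x = (\<exists>l\<in>{2^d..<2^(d+1)}. \<forall>k<d. x (l div 2^k - 1))"

end

theory Submission
  imports Defs
begin

text \<open>With \<open>p = (1 + \<epsilon>)/2\<close>, the probability that some leaf below a node of height h is alive obeys
  \<open>a(h+1) = 1 - (1 - p a(h))\<^sup>2\<close>, and this recursion never drops below \<open>2p - 1 = \<epsilon>\<close>; so f(x) = 1
  with probability at least \<open>\<epsilon>\<close>. A non-adaptive strategy that stops after k tests has certified
  f(x) = 1 only if some alive root-to-leaf path lies inside its first k variables. Distinct leaves
  have distinct last edges, so at most k leaves qualify, each alive with probability
  \<open>q = p\<^sup>d\<close>: the strategy stops within k tests on a 1-input with probability at most kq. Hence it
  makes more than k tests with probability at least \<open>\<epsilon> - kq \<ge> \<epsilon>/2\<close> for all \<open>k \<le> \<epsilon>/(2q)\<close>, and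
  summing these tail probabilities bounds the expected cost by \<open>\<epsilon>\<^sup>2/(4q)\<close>.\<close>

section \<open>Product measure on Boolean assignments\<close>

definition assignments :: "nat set \<Rightarrow> (nat \<Rightarrow> bool) set" where
  "assignments I = {x. \<forall>i. i \<notin> I \<longrightarrow> \<not> x i}"

definition weight :: "(nat \<Rightarrow> real) \<Rightarrow> nat set \<Rightarrow> (nat \<Rightarrow> bool) \<Rightarrow> real" where
  "weight p I x = (\<Prod>i\<in>I. if x i then p i else 1 - p i)"

definition prob :: "(nat \<Rightarrow> real) \<Rightarrow> nat set \<Rightarrow> ((nat \<Rightarrow> bool) \<Rightarrow> bool) \<Rightarrow> real" where
  "prob p I P = (\<Sum>x\<in>assignments I. weight p I x * (if P x then 1 else 0))"

definition depends_only :: "nat set \<Rightarrow> ((nat \<Rightarrow> bool) \<Rightarrow> bool) \<Rightarrow> bool" where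
  "depends_only J P \<longleftrightarrow> (\<forall>x y. (\<forall>i\<in>J. x i = y i) \<longrightarrow> P x = P y)"

lemma inputs_eq_assignments: "inputs n = assignments {1..n}"
  by (simp add: inputs_def assignments_def)

lemma prob_input_eq_weight: "prob_input n p = weight p {1..n}"
  by (simp add: prob_input_def weight_def fun_eq_iff)

lemma weight_nonneg: "(\<And>i. 0 \<le> p i \<and> p i \<le> 1) \<Longrightarrow> 0 \<le> weight p I x"
  unfolding weight_def by (intro prod_nonneg) auto

lemma prob_conj_independent:
  assumes "finite I" "finite J" "I \<inter> J = {}" "depends_only I P" "depends_only J Q"
  shows "prob p (I \<union> J) (\<lambda>x. P x \<and> Q x) = prob p I P * prob p J Q"
proof -
  define join where "join = (\<lambda>(a::nat\<Rightarrow>bool, b::nat\<Rightarrow>bool) i. a i \<or> b i)"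
  define split where "split = (\<lambda>x::nat\<Rightarrow>bool. (\<lambda>i. i \<in> I \<and> x i, \<lambda>i. i \<in> J \<and> x i))"
  have bij: "bij_betw join (assignments I \<times> assignments J) (assignments (I \<union> J))"
    by (rule bij_betw_byWitness[where f' = split])
      (use assms(3) in \<open>auto simp: join_def split_def assignments_def fun_eq_iff\<close>)
  have on_I: "\<forall>i\<in>I. join (a, b) i = a i" and on_J: "\<forall>i\<in>J. join (a, b) i = b i"
    if "a \<in> assignments I" "b \<in> assignments J" for a b
    using that assms(3) by (auto simp: join_def assignments_def)
  have weight_join: "weight p (I \<union> J) (join (a, b)) = weight p I a * weight p J b"
    if "a \<in> assignments I" "b \<in> assignments J" for a b
  proof -
    have "weight p (I \<union> J) (join (a, b)) = weight p I (join (a, b)) * weight p J (join (a, b))"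
      unfolding weight_def using assms(1-3) by (rule prod.union_disjoint)
    thus ?thesis
      unfolding weight_def using on_I[OF that] on_J[OF that] by simp
  qed
  have P_join: "P (join (a, b)) = P a" and Q_join: "Q (join (a, b)) = Q b"
    if "a \<in> assignments I" "b \<in> assignments J" for a b
    using on_I[OF that] on_J[OF that] assms(4,5) unfolding depends_only_def by blast+
  have "prob p (I \<union> J) (\<lambda>x. P x \<and> Q x)
      = (\<Sum>(a, b)\<in>assignments I \<times> assignments J.
           (weight p I a * (if P a then 1 else 0)) * (weight p J b * (if Q b then 1 else 0)))"
    unfolding prob_def sum.reindex_bij_betw[OF bij, symmetric]
    by (intro sum.cong refl) (auto simp: weight_join P_join Q_join)
  also have "\<dots> = prob p I P * prob p J Q"
    unfolding prob_def sum_product sum.cartesian_product ..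
  finally show ?thesis .
qed

lemma prob_True: "finite I \<Longrightarrow> prob p I (\<lambda>_. True) = 1"
proof (induction I rule: finite_induct)
  case empty
  have "assignments {} = {\<lambda>_. False}" by (auto simp: assignments_def)
  thus ?case by (simp add: prob_def weight_def)
next
  case (insert j I)
  have "assignments {j} = {\<lambda>_. False, \<lambda>i. i = j}" by (auto simp: assignments_def fun_eq_iff)
  moreover have "(\<lambda>_. False) \<noteq> (\<lambda>i::nat. i = j)" by (auto simp: fun_eq_iff)
  ultimately have "prob p {j} (\<lambda>_. True) = 1" by (simp add: prob_def weight_def)
  moreover have "prob p ({j} \<union> I) (\<lambda>x. True \<and> True) = prob p {j} (\<lambda>_. True) * prob p I (\<lambda>_. True)"
    using insert by (intro prob_conj_independent) (auto simp: depends_only_def)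
  ultimately show ?case using insert.IH by simp
qed

lemma prob_singleton: "prob p {j} (\<lambda>x. x j) = p j"
proof -
  have "assignments {j} = {\<lambda>_. False, \<lambda>i. i = j}" by (auto simp: assignments_def fun_eq_iff)
  moreover have "(\<lambda>_. False) \<noteq> (\<lambda>i::nat. i = j)" by (auto simp: fun_eq_iff)
  ultimately show ?thesis by (simp add: prob_def weight_def)
qed

lemma prob_not: "finite I \<Longrightarrow> prob p I (\<lambda>x. \<not> P x) = 1 - prob p I P"
proof -
  have "prob p I (\<lambda>x. \<not> P x) = prob p I (\<lambda>_. True) - prob p I P"
    unfolding prob_def sum_subtractf[symmetric] by (intro sum.cong) auto
  thus "finite I \<Longrightarrow> ?thesis" using prob_True by simp
qed

lemma prob_marginal:
  assumes "finite I" "J \<subseteq> I" "depends_only J P"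
  shows "prob p I P = prob p J P"
proof -
  have "prob p (J \<union> (I - J)) (\<lambda>x. P x \<and> True) = prob p J P * prob p (I - J) (\<lambda>_. True)"
    using assms finite_subset by (intro prob_conj_independent) (auto simp: depends_only_def)
  moreover have "J \<union> (I - J) = I" using assms by auto
  ultimately show ?thesis using prob_True[of "I - J"] assms by simp
qed

lemma prob_disj_independent:
  assumes "finite I" "finite J" "I \<inter> J = {}" "depends_only I P" "depends_only J Q"
  shows "prob p (I \<union> J) (\<lambda>x. P x \<or> Q x) = 1 - (1 - prob p I P) * (1 - prob p J Q)"
proof -
  have "prob p (I \<union> J) (\<lambda>x. \<not> P x \<and> \<not> Q x) = prob p I (\<lambda>x. \<not> P x) * prob p J (\<lambda>x. \<not> Q x)"
    using assms by (intro prob_conj_independent) (auto simp: depends_only_def)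
  thus ?thesis using prob_not[of "I \<union> J" p "\<lambda>x. \<not> P x \<and> \<not> Q x"] prob_not[of I] prob_not[of J] assms
    by simp
qed

lemma prob_all_true:
  assumes "finite I" "E \<subseteq> I"
  shows "prob p I (\<lambda>x. \<forall>i\<in>E. x i) = (\<Prod>i\<in>E. p i)"
proof -
  have "finite E" using assms finite_subset by blast
  hence "prob p E (\<lambda>x. \<forall>i\<in>E. x i) = (\<Prod>i\<in>E. p i)"
  proof (induction E rule: finite_induct)
    case empty
    show ?case using prob_True[of "{}" p] by simp
  next
    case (insert j E)
    have "prob p ({j} \<union> E) (\<lambda>x. x j \<and> (\<forall>i\<in>E. x i)) = prob p {j} (\<lambda>x. x j) * prob p E (\<lambda>x. \<forall>i\<in>E. x i)"
      using insert by (intro prob_conj_independent) (auto simp: depends_only_def)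
    thus ?case using insert prob_singleton by simp
  qed
  moreover have "depends_only E (\<lambda>x. \<forall>i\<in>E. x i)" by (auto simp: depends_only_def)
  ultimately show ?thesis using prob_marginal[OF assms] by simp
qed

lemma prob_Ex_le_sum:
  assumes "finite I" "finite L" "\<And>i. 0 \<le> p i \<and> p i \<le> 1"
    and "\<And>x. x \<in> assignments I \<Longrightarrow> P x \<Longrightarrow> \<exists>l\<in>L. Q l x"
  shows "prob p I P \<le> (\<Sum>l\<in>L. prob p I (Q l))"
proof -
  have "prob p I P \<le> (\<Sum>x\<in>assignments I. weight p I x * (\<Sum>l\<in>L. if Q l x then 1 else 0))"
    unfolding prob_def
  proof (intro sum_mono mult_left_mono)
    fix x assume x: "x \<in> assignments I"
    show "0 \<le> weight p I x" using weight_nonneg[OF assms(3)] .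
    show "(if P x then 1 else 0) \<le> (\<Sum>l\<in>L. if Q l x then 1 else (0::real))"
    proof (cases "P x")
      case True
      then obtain l where "l \<in> L" "Q l x" using assms(4)[OF x] by blast
      hence "(\<Sum>l\<in>{l}. if Q l x then 1 else (0::real)) \<le> (\<Sum>l\<in>L. if Q l x then 1 else 0)"
        using assms(2) by (intro sum_mono2) auto
      thus ?thesis using True \<open>Q l x\<close> by simp
    qed (simp add: sum_nonneg)
  qed
  also have "\<dots> = (\<Sum>l\<in>L. prob p I (Q l))"
    unfolding prob_def sum_distrib_left by (subst sum.swap) (simp add: mult.commute)
  finally show ?thesis .
qed

lemma prob_le_prob_add:
  assumes "finite I" "\<And>i. 0 \<le> p i \<and> p i \<le> 1" "\<And>x. x \<in> assignments I \<Longrightarrow> P x \<Longrightarrow> Q x \<or> R x"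
  shows "prob p I P \<le> prob p I Q + prob p I R"
  using prob_Ex_le_sum[of I "{True, False}" p P "\<lambda>b. if b then Q else R"] assms by auto

lemma sum_prob_less_le_expectation:
  assumes "\<And>i. 0 \<le> p i \<and> p i \<le> 1"
  shows "(\<Sum>k<m. prob p I (\<lambda>x. k < N x)) \<le> (\<Sum>x\<in>assignments I. weight p I x * real (N x))"
proof -
  have "(\<Sum>k<m. prob p I (\<lambda>x. k < N x))
      = (\<Sum>x\<in>assignments I. weight p I x * (\<Sum>k<m. if k < N x then 1 else 0))"
    unfolding prob_def sum_distrib_left by (subst sum.swap) (simp add: mult.commute)
  also have "\<dots> \<le> (\<Sum>x\<in>assignments I. weight p I x * real (N x))"
  proof (intro sum_mono mult_left_mono)
    fix x
    have "(\<Sum>k<m. if k < N x then 1 else 0 :: real) = real (card {k. k < m \<and> k < N x})"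
      by (simp add: sum.If_cases lessThan_def Collect_conj_eq)
    also have "\<dots> \<le> real (card {..<N x})" by (intro of_nat_mono card_mono) auto
    finally show "(\<Sum>k<m. if k < N x then 1 else 0 :: real) \<le> real (N x)" by simp
  qed (rule weight_nonneg[OF assms])
  finally show ?thesis .
qed

section \<open>Survival probability of the binary tree\<close>

text \<open>Heap indexing as in bintree_fun: the edges from node v to its children 2v and 2v+1 are
  the variables 2v - 1 and 2v.\<close>

fun alive_below :: "nat \<Rightarrow> nat \<Rightarrow> (nat \<Rightarrow> bool) \<Rightarrow> bool" where
  "alive_below v 0 x = True"
| "alive_below v (Suc h) x \<longleftrightarrow>
     x (2*v - 1) \<and> alive_below (2*v) h x \<or> x (2*v) \<and> alive_below (2*v+1) h x"

fun subtree_edges :: "nat \<Rightarrow> nat \<Rightarrow> nat set" where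
  "subtree_edges v 0 = {}"
| "subtree_edges v (Suc h) =
     insert (2*v - 1) (insert (2*v) (subtree_edges (2*v) h \<union> subtree_edges (2*v+1) h))"

fun survival :: "real \<Rightarrow> nat \<Rightarrow> real" where
  "survival p 0 = 1"
| "survival p (Suc h) = 1 - (1 - p * survival p h)^2"

lemma finite_subtree_edges: "finite (subtree_edges v h)"
  by (induction h arbitrary: v) auto

lemma depends_only_alive_below: "depends_only (subtree_edges v h) (alive_below v h)"
proof (induction h arbitrary: v)
  case (Suc h)
  show ?case unfolding depends_only_def
  proof (intro allI impI)
    fix x y :: "nat \<Rightarrow> bool"
    assume agree: "\<forall>i\<in>subtree_edges v (Suc h). x i = y i"
    hence "alive_below (2*v) h x = alive_below (2*v) h y"
      "alive_below (2*v+1) h x = alive_below (2*v+1) h y"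
      using Suc.IH[of "2*v"] Suc.IH[of "2*v+1"] unfolding depends_only_def by simp_all
    thus "alive_below v (Suc h) x = alive_below v (Suc h) y" using agree by simp
  qed
qed (simp add: depends_only_def)

lemma subtree_edges_ancestor:
  "1 \<le> v \<Longrightarrow> e \<in> subtree_edges v h \<Longrightarrow> \<exists>j. 1 \<le> j \<and> j \<le> h \<and> (e + 1) div 2^j = v"
proof (induction h arbitrary: v)
  case (Suc h)
  show ?case
  proof (cases "e = 2*v - 1 \<or> e = 2*v")
    case True
    thus ?thesis using Suc.prems by (intro exI[of _ 1]) auto
  next
    case False
    then obtain w where w: "w = 2*v \<or> w = 2*v+1" "e \<in> subtree_edges w h"
      using Suc.prems by auto
    moreover have "1 \<le> w" using w(1) Suc.prems by auto
    ultimately obtain j where j: "1 \<le> j" "j \<le> h" "(e+1) div 2^j = w"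
      using Suc.IH by blast
    have "(e+1) div 2^Suc j = w div 2" using j(3) by (metis div_mult2_eq power_Suc2)
    thus ?thesis using w j by (intro exI[of _ "Suc j"]) auto
  qed
qed simp

lemma div_power_le_half: "1 \<le> j \<Longrightarrow> (u::nat) div 2^j \<le> u div 2"
  using power_increasing[of 1 j "2::nat"] by (intro div_le_mono2) auto

lemma ancestors_of_siblings_distinct:
  assumes "1 \<le> v" "1 \<le> j" "1 \<le> j'" "(u::nat) div 2^j = 2*v" "u div 2^j' = 2*v+1"
  shows False
proof (cases j j' rule: linorder_cases)
  case less
  hence "(2::nat)^j' = 2^j * 2^(j' - j)" by (simp flip: power_add)
  hence "u div 2^j' = (u div 2^j) div 2^(j' - j)" by (simp add: div_mult2_eq)
  also have "\<dots> \<le> 2*v div 2" using div_power_le_half[of "j' - j" "2*v"] less assms(4) by simp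
  finally show False using assms(5) by simp
next
  case greater
  hence "(2::nat)^j = 2^j' * 2^(j - j')" by (simp flip: power_add)
  hence "u div 2^j = (u div 2^j') div 2^(j - j')" by (simp add: div_mult2_eq)
  also have "\<dots> \<le> (2*v+1) div 2" using div_power_le_half[of "j - j'" "2*v+1"] greater assms(5) by simp
  finally show False using assms(1,4) by simp
qed (use assms in simp)

lemma subtree_edges_disjoint:
  assumes "1 \<le> v"
  shows "subtree_edges (2*v) h \<inter> subtree_edges (2*v+1) h = {}"
proof -
  have False if left: "e \<in> subtree_edges (2*v) h" and right: "e \<in> subtree_edges (2*v+1) h" for e
  proof -
    obtain j j' where "1 \<le> j" "(e+1) div 2^j = 2*v" "1 \<le> j'" "(e+1) div 2^j' = 2*v+1"
      using subtree_edges_ancestor[OF _ left] subtree_edges_ancestor[OF _ right] assms by force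
    thus False using ancestors_of_siblings_distinct assms by blast
  qed
  thus ?thesis by blast
qed

lemma root_edges_notin_subtree_edges:
  assumes "1 \<le> v" "w = 2*v \<or> w = 2*v+1"
  shows "2*v - 1 \<notin> subtree_edges w h" "2*v \<notin> subtree_edges w h"
proof -
  have "w \<le> (e + 1) div 2" if e: "e \<in> subtree_edges w h" for e
  proof -
    obtain j where "1 \<le> j" "(e + 1) div 2^j = w"
      using subtree_edges_ancestor[OF _ e] assms by force
    thus ?thesis using div_power_le_half by metis
  qed
  thus "2*v - 1 \<notin> subtree_edges w h" "2*v \<notin> subtree_edges w h" using assms by fastforce+
qed

lemma prob_alive_below:
  "1 \<le> v \<Longrightarrow> prob (\<lambda>_. p) (subtree_edges v h) (alive_below v h) = survival p h"
proof (induction h arbitrary: v)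
  case 0
  show ?case using prob_True[of "{}"] by simp
next
  case (Suc h)
  define I1 where "I1 = insert (2*v - 1) (subtree_edges (2*v) h)"
  define I2 where "I2 = insert (2*v) (subtree_edges (2*v+1) h)"
  have notin: "2*v - 1 \<notin> subtree_edges (2*v) h" "2*v \<notin> subtree_edges (2*v+1) h"
    using root_edges_notin_subtree_edges[OF Suc.prems] by blast+
  have "I1 \<inter> I2 = {}"
    using subtree_edges_disjoint[OF Suc.prems] root_edges_notin_subtree_edges[OF Suc.prems] Suc.prems
    by (auto simp: I1_def I2_def)
  moreover have "subtree_edges v (Suc h) = I1 \<union> I2" by (auto simp: I1_def I2_def)
  moreover have "prob (\<lambda>_. p) I1 (\<lambda>x. x (2*v - 1) \<and> alive_below (2*v) h x) = p * survival p h"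
    using prob_conj_independent[of "{2*v - 1}" "subtree_edges (2*v) h" "\<lambda>x. x (2*v - 1)"]
      notin depends_only_alive_below prob_singleton Suc.IH[of "2*v"] Suc.prems
    by (simp add: I1_def finite_subtree_edges depends_only_def)
  moreover have "prob (\<lambda>_. p) I2 (\<lambda>x. x (2*v) \<and> alive_below (2*v+1) h x) = p * survival p h"
    using prob_conj_independent[of "{2*v}" "subtree_edges (2*v+1) h" "\<lambda>x. x (2*v)"]
      notin depends_only_alive_below prob_singleton Suc.IH[of "2*v+1"]
    by (simp add: I2_def finite_subtree_edges depends_only_def)
  moreover have "depends_only I1 (\<lambda>x. x (2*v - 1) \<and> alive_below (2*v) h x)"
    "depends_only I2 (\<lambda>x. x (2*v) \<and> alive_below (2*v+1) h x)"
    using depends_only_alive_below[of "2*v" h] depends_only_alive_below[of "2*v+1" h]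
    unfolding depends_only_def I1_def I2_def by auto
  ultimately show ?case
    using prob_disj_independent[of I1 I2] by (simp add: I1_def I2_def finite_subtree_edges power2_eq_square)
qed

text \<open>With \<open>e = 2p - 1\<close> one has \<open>1 - (1 - p e)\<^sup>2 - e = e\<^sup>2 (1 - p\<^sup>2)\<close>, so \<open>e\<close> is a sub-fixed point of the
  increasing map \<open>a \<mapsto> 1 - (1 - p a)\<^sup>2\<close>.\<close>
lemma survival_bounds:
  fixes p :: real
  assumes "1/2 \<le> p" "p \<le> 1"
  shows "2*p - 1 \<le> survival p h \<and> survival p h \<le> 1"
proof (induction h)
  case (Suc h)
  have "(1 - p * survival p h)^2 \<le> (1 - p * (2*p - 1))^2"
    using Suc assms by (intro power_mono) (auto intro!: mult_left_mono mult_le_one)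
  moreover have "1 - (1 - p * (2*p - 1))^2 - (2*p - 1) = (2*p - 1)^2 * (1 - p^2)"
    by (simp add: power2_eq_square algebra_simps)
  moreover have "0 \<le> (2*p - 1)^2 * (1 - p^2)"
    using assms by (intro mult_nonneg_nonneg) (auto simp: power_le_one)
  ultimately show ?case by simp
qed (use assms in simp)

lemma alive_below_iff:
  "1 \<le> v \<Longrightarrow> alive_below v h x \<longleftrightarrow> (\<exists>l\<in>{v*2^h..<(v+1)*2^h}. \<forall>k<h. x (l div 2^k - 1))"
proof (induction h arbitrary: v)
  case (Suc h)
  have left: "l div 2^h = 2*v" if "l \<in> {2*v*2^h..<(2*v+1)*2^h}" for l
    using that by (intro div_nat_eqI) (auto simp: mult.commute)
  have right: "l div 2^h = 2*v+1" if "l \<in> {(2*v+1)*2^h..<(2*v+1+1)*2^h}" for l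
    using that by (intro div_nat_eqI) (auto simp: mult.commute)
  have split: "{v*2^Suc h..<(v+1)*2^Suc h} = {2*v*2^h..<(2*v+1)*2^h} \<union> {(2*v+1)*2^h..<(2*v+1+1)*2^h}"
    by auto
  have all_Suc: "(\<forall>k<Suc h. x (l div 2^k - 1)) \<longleftrightarrow> (\<forall>k<h. x (l div 2^k - 1)) \<and> x (l div 2^h - 1)" for l
    by (auto simp: less_Suc_eq)
  have "(\<exists>l\<in>{2*v*2^h..<(2*v+1)*2^h}. \<forall>k<Suc h. x (l div 2^k - 1))
      \<longleftrightarrow> x (2*v - 1) \<and> alive_below (2*v) h x"
    using Suc.IH[of "2*v"] Suc.prems left unfolding all_Suc by auto
  moreover have "(\<exists>l\<in>{(2*v+1)*2^h..<(2*v+1+1)*2^h}. \<forall>k<Suc h. x (l div 2^k - 1))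
      \<longleftrightarrow> x (2*v) \<and> alive_below (2*v+1) h x"
    using Suc.IH[of "2*v+1"] right unfolding all_Suc by auto
  ultimately show ?case unfolding split by auto
qed simp

lemma bintree_fun_eq_alive_below: "bintree_fun d = alive_below 1 d"
  using alive_below_iff[of 1 d] by (simp add: fun_eq_iff bintree_fun_def mult_2)

lemma subtree_edges_root: "subtree_edges 1 d \<subseteq> {1..2^(d+1) - 2}"
proof
  fix e assume "e \<in> subtree_edges 1 d"
  then obtain j where j: "1 \<le> j" "j \<le> d" "(e + 1) div 2^j = 1"
    using subtree_edges_ancestor[of 1] by blast
  hence "2^j \<le> e + 1" "e + 1 < 2 * 2^j"
    using times_div_less_eq_dividend[of "2^j" "e + 1"] dividend_less_times_div[of "2^j" "e + 1"]
    by simp_all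
  moreover have "(2::nat) \<le> 2^j" "(2::nat)^j \<le> 2^d" "(2::nat)^(d+1) = 2 * 2^d"
    using j power_increasing[of 1 j "2::nat"] power_increasing[of j d "2::nat"] by simp_all
  ultimately show "e \<in> {1..2^(d+1) - 2}" unfolding atLeastAtMost_iff by linarith
qed

lemma prob_bintree_fun_ge:
  assumes "1/2 \<le> p" "p \<le> 1"
  shows "2*p - 1 \<le> prob (\<lambda>_. p) {1..2^(d+1) - 2} (bintree_fun d)"
proof -
  have "prob (\<lambda>_. p) {1..2^(d+1) - 2} (bintree_fun d) = prob (\<lambda>_. p) (subtree_edges 1 d) (alive_below 1 d)"
    unfolding bintree_fun_eq_alive_below
    using subtree_edges_root depends_only_alive_below by (intro prob_marginal) auto
  also have "\<dots> = survival p d" by (simp add: prob_alive_below)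
  finally show ?thesis using survival_bounds[OF assms] by simp
qed

section \<open>Certificates seen by a non-adaptive strategy\<close>

definition leaf_path :: "nat \<Rightarrow> nat \<Rightarrow> nat set" where
  "leaf_path d l = (\<lambda>k. l div 2^k - 1) ` {..<d}"

lemma bintree_fun_iff_leaf_path:
  "bintree_fun d x \<longleftrightarrow> (\<exists>l\<in>{2^d..<2^(d+1)}. \<forall>e\<in>leaf_path d l. x e)"
  by (auto simp: bintree_fun_def leaf_path_def)

lemma ancestor_of_leaf_ge_2:
  assumes "(2::nat)^d \<le> l" "k < d"
  shows "2 \<le> l div 2^k"
proof -
  have "(2::nat) ^ 1 \<le> 2^(d - k)" using assms by (intro power_increasing) auto
  also have "\<dots> = 2^d div 2^k" using assms by (simp add: power_diff)
  also have "\<dots> \<le> l div 2^k" using assms by (intro div_le_mono)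
  finally show ?thesis by simp
qed

lemma leaf_path_subset:
  assumes "l \<in> {2^d..<2^(d+1)}"
  shows "leaf_path d l \<subseteq> {1..2^(d+1) - 2}"
proof
  fix e assume "e \<in> leaf_path d l"
  then obtain k where "k < d" "e = l div 2^k - 1" by (auto simp: leaf_path_def)
  moreover have "l div 2^k \<le> l" "l < 2^(d+1)" "2 \<le> l div 2^k"
    using ancestor_of_leaf_ge_2[of d l k] assms \<open>k < d\<close> by auto
  ultimately show "e \<in> {1..2^(d+1) - 2}" unfolding atLeastAtMost_iff by arith
qed

lemma card_leaf_path:
  assumes "2^d \<le> l"
  shows "card (leaf_path d l) = d"
proof -
  have neq: "l div 2^k - 1 \<noteq> l div 2^k' - 1" if "k < k'" "k' < d" for k k'
  proof -
    have "(2::nat)^k' = 2^k * 2^(k' - k)" using that by (simp flip: power_add)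
    hence "l div 2^k' = (l div 2^k) div 2^(k' - k)" by (simp add: div_mult2_eq)
    also have "\<dots> \<le> l div 2^k div 2" using that by (intro div_power_le_half) auto
    also have "\<dots> < l div 2^k" using ancestor_of_leaf_ge_2[OF assms, of k] that by simp
    finally show ?thesis using ancestor_of_leaf_ge_2[OF assms, of k'] that by simp
  qed
  have "inj_on (\<lambda>k. l div 2^k - 1) {..<d}" by (intro linorder_inj_onI') (use neq in blast)
  thus ?thesis by (simp add: leaf_path_def card_image)
qed

lemma length_strategy: "\<sigma> \<in> strategies n \<Longrightarrow> length \<sigma> = n"
  unfolding strategies_def using distinct_card by fastforce

lemma determined_mono: "S \<subseteq> T \<Longrightarrow> determined f n S x \<Longrightarrow> determined f n T x"
  unfolding determined_def by blast

lemma num_tests_le_and_determined: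
  assumes "\<sigma> \<in> strategies n" "x \<in> inputs n"
  shows "num_tests f n \<sigma> x \<le> n" "determined f n (set (take (num_tests f n \<sigma> x) \<sigma>)) x"
proof -
  have "set (take n \<sigma>) = {1..n}"
    using assms(1) length_strategy[OF assms(1)] by (simp add: strategies_def)
  moreover have "y = x" if "y \<in> inputs n" "\<forall>i\<in>{1..n}. y i = x i" for y
    using that assms(2) by (auto simp: inputs_def fun_eq_iff)
  ultimately have "determined f n (set (take n \<sigma>)) x" by (auto simp: determined_def)
  thus "num_tests f n \<sigma> x \<le> n" "determined f n (set (take (num_tests f n \<sigma> x) \<sigma>)) x"
    unfolding num_tests_def by (auto intro: LeastI Least_le)
qed

text \<open>If the tested set S determines \<open>f x = 1\<close>, then setting every untested variable to 0 keeps
  the value 1, so some alive leaf has its whole path inside S.\<close>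
lemma determined_bintree_fun_leaf_path:
  assumes "x \<in> inputs n" "bintree_fun d x" "determined (bintree_fun d) n S x"
  shows "\<exists>l\<in>{2^d..<2^(d+1)}. leaf_path d l \<subseteq> S \<and> (\<forall>e\<in>leaf_path d l. x e)"
proof -
  define y where "y i \<longleftrightarrow> i \<in> S \<and> x i" for i
  have "y \<in> inputs n" "\<forall>i\<in>S. y i = x i" using assms(1) by (auto simp: y_def inputs_def)
  hence "bintree_fun d y" using assms(2,3) unfolding determined_def by blast
  thus ?thesis unfolding bintree_fun_iff_leaf_path y_def by blast
qed

text \<open>Distinct leaves enter through distinct edges \<open>l - 1\<close>, which lie on their paths (\<open>d \<ge> 1\<close>),
  so at most k leaves have their path among k tested variables.\<close>
lemma card_leaves_covered:
  assumes "1 \<le> d" "finite S"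
  shows "card {l\<in>{2^d..<2^(d+1)}. leaf_path d l \<subseteq> S} \<le> card S"
proof (rule card_inj_on_le)
  show "inj_on (\<lambda>l. l - 1) {l\<in>{2^d..<2^(d+1)}. leaf_path d l \<subseteq> S}"
    by (rule inj_onI) (auto simp: le_diff_iff' order_trans[OF one_le_power])
  have "l - 1 \<in> leaf_path d l" for l
    using assms(1) unfolding leaf_path_def by (intro image_eqI[of _ _ 0]) auto
  thus "(\<lambda>l. l - 1) ` {l\<in>{2^d..<2^(d+1)}. leaf_path d l \<subseteq> S} \<subseteq> S" by blast
qed (use assms(2) in simp)

lemma prob_bintree_fun_few_tests:
  assumes "1 \<le> d" "\<sigma> \<in> strategies (2^(d+1) - 2)" "0 \<le> p" "p \<le> 1"
  shows "prob (\<lambda>_. p) {1..2^(d+1) - 2}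
           (\<lambda>x. bintree_fun d x \<and> num_tests (bintree_fun d) (2^(d+1) - 2) \<sigma> x \<le> k) \<le> real k * p^d"
proof -
  define n where "n = 2^(d+1) - (2::nat)"
  define L where "L = {l\<in>{2^d..<2^(d+1)}. leaf_path d l \<subseteq> set (take k \<sigma>)}"
  have "prob (\<lambda>_. p) {1..n} (\<lambda>x. bintree_fun d x \<and> num_tests (bintree_fun d) n \<sigma> x \<le> k)
      \<le> (\<Sum>l\<in>L. prob (\<lambda>_. p) {1..n} (\<lambda>x. \<forall>e\<in>leaf_path d l. x e))"
  proof (rule prob_Ex_le_sum)
    fix x assume x: "x \<in> assignments {1..n}"
      and f: "bintree_fun d x \<and> num_tests (bintree_fun d) n \<sigma> x \<le> k"
    hence x': "x \<in> inputs n" by (simp add: inputs_eq_assignments)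
    have "set (take (num_tests (bintree_fun d) n \<sigma> x) \<sigma>) \<subseteq> set (take k \<sigma>)"
      using f by (simp add: set_take_subset_set_take)
    hence "determined (bintree_fun d) n (set (take k \<sigma>)) x"
      using num_tests_le_and_determined(2)[OF assms(2)[folded n_def] x'] by (rule determined_mono)
    thus "\<exists>l\<in>L. \<forall>e\<in>leaf_path d l. x e"
      using determined_bintree_fun_leaf_path[OF x'] f unfolding L_def by blast
  qed (use assms in \<open>auto simp: L_def\<close>)
  also have "\<dots> = (\<Sum>l\<in>L. p^d)"
    using leaf_path_subset card_leaf_path by (intro sum.cong) (auto simp: L_def n_def prob_all_true)
  also have "\<dots> \<le> real k * p^d"
    using card_leaves_covered[OF assms(1), of "set (take k \<sigma>)"] card_length[of "take k \<sigma>"] assms(3)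
    by (auto simp: L_def intro!: mult_right_mono)
  finally show ?thesis by (simp add: n_def)
qed

lemma expected_cost_unit:
  assumes "\<sigma> \<in> strategies n"
  shows "expected_cost f n (\<lambda>_. 1) p \<sigma>
           = (\<Sum>x\<in>assignments {1..n}. weight p {1..n} x * real (num_tests f n \<sigma> x))"
proof -
  have "strat_cost f n (\<lambda>_. 1) \<sigma> x = real (num_tests f n \<sigma> x)" if "x \<in> inputs n" for x
    using num_tests_le_and_determined(1)[OF assms that] length_strategy[OF assms]
    by (simp add: strat_cost_def sum_list_triv)
  thus ?thesis
    unfolding expected_cost_def inputs_eq_assignments prob_input_eq_weight by (intro sum.cong) auto
qed

lemma expected_cost_bintree_fun_ge:
  fixes \<epsilon> :: real
  defines "p \<equiv> (1 + \<epsilon>) / 2"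
  assumes "0 < \<epsilon>" "\<epsilon> \<le> 1" "1 \<le> d" "\<sigma> \<in> strategies (2^(d+1) - 2)"
  shows "\<epsilon>^2 / (4 * p^d) \<le> expected_cost (bintree_fun d) (2^(d+1) - 2) (\<lambda>_. 1) (\<lambda>_. p) \<sigma>"
proof -
  define n where "n = 2^(d+1) - (2::nat)"
  define N where "N = num_tests (bintree_fun d) n \<sigma>"
  define q where "q = p^d"
  define m where "m = nat \<lfloor>\<epsilon> / (2*q)\<rfloor> + 1"
  have p: "1/2 \<le> p" "p \<le> 1" "0 \<le> p" and "0 < q" and "2*p - 1 = \<epsilon>"
    using assms(2,3) by (auto simp: p_def q_def field_simps)
  have tail: "\<epsilon> / 2 \<le> prob (\<lambda>_. p) {1..n} (\<lambda>x. k < N x)" if "k < m" for k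
  proof -
    have "0 \<le> \<lfloor>\<epsilon> / (2*q)\<rfloor>" using \<open>0 < q\<close> assms(2) by simp
    hence "int k \<le> \<lfloor>\<epsilon> / (2*q)\<rfloor>" using that by (simp add: m_def less_Suc_eq_le le_nat_iff)
    hence "real k \<le> \<epsilon> / (2*q)" by (simp add: le_floor_iff)
    hence "real k * q \<le> \<epsilon> / 2" using \<open>0 < q\<close> by (simp add: field_simps)
    have "\<epsilon> \<le> prob (\<lambda>_. p) {1..n} (bintree_fun d)"
      using prob_bintree_fun_ge[OF p(1,2), of d] \<open>2*p - 1 = \<epsilon>\<close> by (simp add: n_def)
    also have "\<dots> \<le> prob (\<lambda>_. p) {1..n} (\<lambda>x. k < N x)
                     + prob (\<lambda>_. p) {1..n} (\<lambda>x. bintree_fun d x \<and> N x \<le> k)"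
      using p by (intro prob_le_prob_add) auto
    also have "prob (\<lambda>_. p) {1..n} (\<lambda>x. bintree_fun d x \<and> N x \<le> k) \<le> real k * q"
      using prob_bintree_fun_few_tests[OF assms(4,5) p(3,2)] by (simp add: n_def N_def q_def)
    finally show ?thesis using \<open>real k * q \<le> \<epsilon> / 2\<close> by simp
  qed
  have "\<epsilon>^2 / (4*q) = \<epsilon> / (2*q) * (\<epsilon> / 2)" by (simp add: power2_eq_square)
  also have "\<dots> \<le> real m * (\<epsilon> / 2)"
    using assms(2) \<open>0 < q\<close> by (intro mult_right_mono) (auto simp: m_def, linarith)
  also have "\<dots> = (\<Sum>k<m. \<epsilon> / 2)" by simp
  also have "\<dots> \<le> (\<Sum>k<m. prob (\<lambda>_. p) {1..n} (\<lambda>x. k < N x))" by (intro sum_mono tail) simp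
  also have "\<dots> \<le> (\<Sum>x\<in>assignments {1..n}. weight (\<lambda>_. p) {1..n} x * real (N x))"
    using p by (intro sum_prob_less_le_expectation) auto
  also have "\<dots> = expected_cost (bintree_fun d) n (\<lambda>_. 1) (\<lambda>_. p) \<sigma>"
    using expected_cost_unit assms(5) by (simp add: n_def N_def)
  finally show ?thesis by (simp add: n_def q_def)
qed

lemma finite_strategies: "finite (strategies n)"
proof -
  have "strategies n \<subseteq> {xs. set xs \<subseteq> {1..n} \<and> distinct xs}" by (auto simp: strategies_def)
  thus ?thesis using finite_subset_distinct[of "{1..n}"] finite_subset by auto
qed

theorem mainTheorem13:
  fixes \<epsilon> :: real and d :: nat
  assumes "0 < \<epsilon>" and "\<epsilon> \<le> 1/2" and "d \<ge> 1"
    and "((1 + \<epsilon>) / 2) ^ d \<le> \<epsilon>"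
  shows "OPT_N (bintree_fun d) (2^(d+1) - 2) (\<lambda>_. 1) (\<lambda>_. (1 + \<epsilon>) / 2)
           \<ge> \<epsilon>^2 / (8 * ((1 + \<epsilon>) / 2) ^ d)"
proof -
  let ?q = "((1 + \<epsilon>) / 2) ^ d"
  have "\<epsilon>^2 / (8 * ?q) \<le> expected_cost (bintree_fun d) (2^(d+1) - 2) (\<lambda>_. 1) (\<lambda>_. (1 + \<epsilon>) / 2) \<sigma>"
    if "\<sigma> \<in> strategies (2^(d+1) - 2)" for \<sigma>
  proof -
    have "\<epsilon>^2 / (8 * ?q) \<le> \<epsilon>^2 / (4 * ?q)"
      using assms(1) by (intro divide_left_mono) auto
    also have "\<dots> \<le> expected_cost (bintree_fun d) (2^(d+1) - 2) (\<lambda>_. 1) (\<lambda>_. (1 + \<epsilon>) / 2) \<sigma>"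
      using expected_cost_bintree_fun_ge[of \<epsilon> d \<sigma>] assms(1-3) that by simp
    finally show ?thesis .
  qed
  moreover have "[1..<2^(d+1) - 1] \<in> strategies (2^(d+1) - 2)" by (auto simp: strategies_def)
  ultimately show ?thesis
    unfolding OPT_N_def using finite_strategies by (subst Min_ge_iff) auto
qed

end
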